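(* Let $(P,\le,\mu,\gamma)$ be an $S$-sieved preordered heap (for a semilattice $S$). Then the source multiplication $\mu$ on $P$ is monotonic in both arguments: for all $a,b,c\in P$, $a\le c$ implies $\mu(a,b)\le\mu(c,b)$ and $\mu(b,a)\le\mu(b,c)$.
   Context: A preordered heap is a structure $(Q,\le,\mu,\gamma)$ with $(Q,\le)$ a preorder, $\mu\colon Q\times Q\to Q$ monotonic in both arguments, $\gamma\colon Q\to Q$ antitone, satisfying $\gamma(\gamma a)=a$, $\mu(a,\gamma(\mu(\gamma b,a)))\le b$ and $\mu(\gamma(\mu(a,\gamma b)),a)\le b$ for all $a,b$. A homomorphism of preordered heaps $f\colon Q\to Q'$ is an order-preserving map with $f(\mu(a,b))=\mu'(fa,fb)$ and $f(\gamma a)=\gamma'(fa)$. Let $S$ be a semilattice (an associative, commutative, idempotent binary operation, written $xy$). Let $\{(P_x,\le_x,\mu_x,\gamma_x)\}_{x\in S}$ be preordered heaps such that for all $x,y\in S$ there is a unique preordered-heap homomorphism $\iota\colon P_x\to P_{xy}$ (a concretization), with the concretization $P_x\to P_x$ being the identity, and such that for all $x,y,z\in S$ the composite of the concretizations $P_x\to P_{xy}\to P_{xyz}$ equals the concretization $P_x\to P_{xyz}$. Let $P=\bigsqcup_{x\in S}P_x$ (disjoint union). For $a\in P_x$, $b\in P_y$ with concretizations $\iota_x\colon P_x\to P_{xy}$, $\iota_y\colon P_y\to P_{xy}$, define $\mu(a,b)=\mu_{xy}(\iota_x a,\iota_y b)$ and $\gamma(a)=\gamma_x(a)$; and define $a\le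 b$ iff there exist $z\in S$ and concretizations $\iota\colon P_x\to P_z$, $\iota'\colon P_y\to P_z$ with $\iota(a)\le_z\iota'(b)$. Then $(P,\le,\mu,\gamma)$ is called an $S$-sieved preordered heap. *)

theory Defs
  imports Main
begin

text \<open>A preordered heap on the carrier set C (relativised to a carrier, so that a
  whole family of heaps can live in one ambient type).\<close>
definition pheap :: "'a set \<Rightarrow> ('a \<Rightarrow> 'a \<Rightarrow> bool) \<Rightarrow> ('a \<Rightarrow> 'a \<Rightarrow> 'a) \<Rightarrow> ('a \<Rightarrow> 'a) \<Rightarrow> bool" where
  "pheap C le mu ga \<longleftrightarrow>
     (\<forall>a\<in>C. le a a) \<and>
     (\<forall>a\<in>C. \<forall>b\<in>C. \<forall>c\<in>C. le a b \<longrightarrow> le b c \<longrightarrow> le a c) \<and>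
     (\<forall>a\<in>C. \<forall>b\<in>C. mu a b \<in> C) \<and>
     (\<forall>a\<in>C. ga a \<in> C) \<and>
     (\<forall>a\<in>C. \<forall>a'\<in>C. \<forall>b\<in>C. le a a' \<longrightarrow> le (mu a b) (mu a' b)) \<and>
     (\<forall>a\<in>C. \<forall>b\<in>C. \<forall>b'\<in>C. le b b' \<longrightarrow> le (mu a b) (mu a b')) \<and>
     (\<forall>a\<in>C. \<forall>b\<in>C. le a b \<longrightarrow> le (ga b) (ga a)) \<and>
     (\<forall>a\<in>C. ga (ga a) = a) \<and>
     (\<forall>a\<in>C. \<forall>b\<in>C. le (mu a (ga (mu (ga b) a))) b) \<and>
     (\<forall>a\<in>C. \<forall>b\<in>C. le (mu (ga (mu a (ga b))) a) b)"

definition pheap_hom ::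
  "'a set \<Rightarrow> ('a \<Rightarrow> 'a \<Rightarrow> bool) \<Rightarrow> ('a \<Rightarrow> 'a \<Rightarrow> 'a) \<Rightarrow> ('a \<Rightarrow> 'a) \<Rightarrow>
   'a set \<Rightarrow> ('a \<Rightarrow> 'a \<Rightarrow> bool) \<Rightarrow> ('a \<Rightarrow> 'a \<Rightarrow> 'a) \<Rightarrow> ('a \<Rightarrow> 'a) \<Rightarrow> ('a \<Rightarrow> 'a) \<Rightarrow> bool" where
  "pheap_hom C le mu ga C' le' mu' ga' f \<longleftrightarrow>
     (\<forall>a\<in>C. f a \<in> C') \<and>
     (\<forall>a\<in>C. \<forall>b\<in>C. le a b \<longrightarrow> le' (f a) (f b)) \<and>
     (\<forall>a\<in>C. \<forall>b\<in>C. f (mu a b) = mu' (f a) (f b)) \<and>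
     (\<forall>a\<in>C. f (ga a) = ga' (f a))"

definition sieved_data ::
  "('s \<Rightarrow> 's \<Rightarrow> 's) \<Rightarrow> ('s \<Rightarrow> 'a set) \<Rightarrow> ('s \<Rightarrow> 'a \<Rightarrow> 'a \<Rightarrow> bool) \<Rightarrow>
   ('s \<Rightarrow> 'a \<Rightarrow> 'a \<Rightarrow> 'a) \<Rightarrow> ('s \<Rightarrow> 'a \<Rightarrow> 'a) \<Rightarrow> ('s \<Rightarrow> 's \<Rightarrow> 'a \<Rightarrow> 'a) \<Rightarrow> bool" where
  "sieved_data m C le mu ga iota \<longleftrightarrow>
     semilattice m \<and>
     (\<forall>x. pheap (C x) (le x) (mu x) (ga x)) \<and>
     (\<forall>x y. pheap_hom (C x) (le x) (mu x) (ga x) (C (m x y)) (le (m x y)) (mu (m x y)) (ga (m x y)) (iota x y)) \<and>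
     (\<forall>x y f. pheap_hom (C x) (le x) (mu x) (ga x) (C (m x y)) (le (m x y)) (mu (m x y)) (ga (m x y)) f
              \<longrightarrow> (\<forall>a\<in>C x. f a = iota x y a)) \<and>
     (\<forall>x. \<forall>a\<in>C x. iota x x a = a) \<and>
     (\<forall>x y z. \<forall>a\<in>C x. iota (m x y) z (iota x y a) = iota x (m y z) a)"

definition sieved_carrier :: "('s \<Rightarrow> 'a set) \<Rightarrow> ('s \<times> 'a) set" where
  "sieved_carrier C = Sigma UNIV C"

definition sieved_mu ::
  "('s \<Rightarrow> 's \<Rightarrow> 's) \<Rightarrow> ('s \<Rightarrow> 'a \<Rightarrow> 'a \<Rightarrow> 'a) \<Rightarrow> ('s \<Rightarrow> 's \<Rightarrow> 'a \<Rightarrow> 'a) \<Rightarrow>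
   ('s \<times> 'a) \<Rightarrow> ('s \<times> 'a) \<Rightarrow> ('s \<times> 'a)" where
  "sieved_mu m mu iota p q =
     (case p of (x, a) \<Rightarrow> case q of (y, b) \<Rightarrow>
        (m x y, mu (m x y) (iota x y a) (iota y x b)))"

definition sieved_ga :: "('s \<Rightarrow> 'a \<Rightarrow> 'a) \<Rightarrow> ('s \<times> 'a) \<Rightarrow> ('s \<times> 'a)" where
  "sieved_ga ga p = (case p of (x, a) \<Rightarrow> (x, ga x a))"

text \<open>(x,a) \<le> (y,b) iff there are z and concretizations P_x \<rightarrow> P_z, P_y \<rightarrow> P_z
  comparing the images; concretizations into P_z exist exactly for z = x w = y w'.\<close>
definition sieved_le ::
  "('s \<Rightarrow> 's \<Rightarrow> 's) \<Rightarrow> ('s \<Rightarrow> 'a \<Rightarrow> 'a \<Rightarrow> bool) \<Rightarrow> ('s \<Rightarrow> 's \<Rightarrow> 'a \<Rightarrow> 'a) \<Rightarrow>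
   ('s \<times> 'a) \<Rightarrow> ('s \<times> 'a) \<Rightarrow> bool" where
  "sieved_le m le iota p q =
     (case p of (x, a) \<Rightarrow> case q of (y, b) \<Rightarrow>
        (\<exists>w w'. m x w = m y w' \<and> le (m x w) (iota x w a) (iota y w' b)))"

end

theory Submission
  imports Defs
begin

(* Comparisons and products in P are computed after concretizing to a common level, and
   concretizations are heap homomorphisms that compose.  So if p = (x,a) <= r = (y,c) is
   witnessed at level z = x w = y w', then concretizing the products with q = (u,b) by w and
   w' lands both in P_(zu), where they become the products of the concretized witnesses with
   the common factor b concretized to zu; monotonicity of the heap P_(zu) concludes. *)

lemma pheap_mu_mono_left:
  assumes "pheap C le mu ga" "a \<in> C" "a' \<in> C" "b \<in> C" "le a a'"
  shows "le (mu a b) (mu a' b)"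
  using assms unfolding pheap_def by blast

lemma pheap_mu_mono_right:
  assumes "pheap C le mu ga" "a \<in> C" "b \<in> C" "b' \<in> C" "le b b'"
  shows "le (mu a b) (mu a b')"
  using assms unfolding pheap_def by blast

lemma pheap_hom_in:
  assumes "pheap_hom C le mu ga C' le' mu' ga' f" "a \<in> C"
  shows "f a \<in> C'"
  using assms unfolding pheap_hom_def by blast

lemma pheap_hom_mono:
  assumes "pheap_hom C le mu ga C' le' mu' ga' f" "a \<in> C" "b \<in> C" "le a b"
  shows "le' (f a) (f b)"
  using assms unfolding pheap_hom_def by blast

lemma pheap_hom_mu:
  assumes "pheap_hom C le mu ga C' le' mu' ga' f" "a \<in> C" "b \<in> C"
  shows "f (mu a b) = mu' (f a) (f b)"
  using assms unfolding pheap_hom_def by blast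

locale sieved_pheap =
  fixes m :: "'s \<Rightarrow> 's \<Rightarrow> 's" and C :: "'s \<Rightarrow> 'a set"
    and le :: "'s \<Rightarrow> 'a \<Rightarrow> 'a \<Rightarrow> bool" and mu :: "'s \<Rightarrow> 'a \<Rightarrow> 'a \<Rightarrow> 'a"
    and ga :: "'s \<Rightarrow> 'a \<Rightarrow> 'a" and iota :: "'s \<Rightarrow> 's \<Rightarrow> 'a \<Rightarrow> 'a"
  assumes sieved_data: "sieved_data m C le mu ga iota"
begin

sublocale semilattice m
  using sieved_data unfolding sieved_data_def by blast

lemma pheap: "pheap (C x) (le x) (mu x) (ga x)"
  using sieved_data unfolding sieved_data_def by blast

lemma pheap_hom_iota:
  "pheap_hom (C x) (le x) (mu x) (ga x) (C (m x y)) (le (m x y)) (mu (m x y)) (ga (m x y)) (iota x y)"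
  using sieved_data unfolding sieved_data_def by blast

lemma iota_in: "a \<in> C x \<Longrightarrow> iota x y a \<in> C (m x y)"
  by (rule pheap_hom_in[OF pheap_hom_iota])

lemma iota_mono: "a \<in> C x \<Longrightarrow> b \<in> C x \<Longrightarrow> le x a b \<Longrightarrow> le (m x y) (iota x y a) (iota x y b)"
  by (rule pheap_hom_mono[OF pheap_hom_iota])

lemma iota_mu: "a \<in> C x \<Longrightarrow> b \<in> C x \<Longrightarrow> iota x y (mu x a b) = mu (m x y) (iota x y a) (iota x y b)"
  by (rule pheap_hom_mu[OF pheap_hom_iota])

lemma iota_iota: "a \<in> C x \<Longrightarrow> iota (m x y) z (iota x y a) = iota x (m y z) a"
  using sieved_data unfolding sieved_data_def by blast

lemma sieved_mu_pair:
  "sieved_mu m mu iota (x, a) (y, b) = (m x y, mu (m x y) (iota x y a) (iota y x b))"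
  by (simp add: sieved_mu_def)

lemma sieved_le_intro:
  "m x w = m y w' \<Longrightarrow> le (m x w) (iota x w a) (iota y w' b) \<Longrightarrow> sieved_le m le iota (x, a) (y, b)"
  unfolding sieved_le_def by blast

lemma iota_sieved_mu:
  assumes "a \<in> C x" "b \<in> C y"
  shows "iota (m x y) v (mu (m x y) (iota x y a) (iota y x b))
       = mu (m (m x y) v) (iota x (m y v) a) (iota y (m x v) b)"
proof -
  have "iota (m x y) v (iota y x b) = iota y (m x v) b"
    using iota_iota[OF assms(2)] by (simp add: commute)
  moreover have "iota y x b \<in> C (m x y)"
    using iota_in[OF assms(2)] by (simp add: commute)
  ultimately show ?thesis
    using iota_mu[OF iota_in[OF assms(1)]] iota_iota[OF assms(1)] by simp
qed

lemma sieved_mu_mono: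
  assumes "a \<in> C x" "b \<in> C u" "c \<in> C y" "m x w = m y w'"
    and "le (m x w) (iota x w a) (iota y w' c)"
  shows "sieved_le m le iota (sieved_mu m mu iota (x, a) (u, b)) (sieved_mu m mu iota (y, c) (u, b))"
    and "sieved_le m le iota (sieved_mu m mu iota (u, b) (x, a)) (sieved_mu m mu iota (u, b) (y, c))"
proof -
  define z where "z = m x w"
  have z': "z = m y w'"
    using assms(4) z_def by simp
  have "le (m z u) (iota z u (iota x w a)) (iota z u (iota y w' c))"
    using iota_mono[OF _ _ assms(5)] iota_in[OF assms(1), of w] iota_in[OF assms(3), of w']
    by (simp add: z_def assms(4))
  moreover have "iota z u (iota x w a) = iota x (m u w) a"
    using iota_iota[OF assms(1)] by (simp add: z_def commute)
  moreover have "iota z u (iota y w' c) = iota y (m u w') c"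
    using iota_iota[OF assms(3)] by (simp add: z' commute)
  ultimately have concretized_le: "le (m z u) (iota x (m u w) a) (iota y (m u w') c)"
    by simp
  have levels_x: "m x (m u w) = m z u" "m (m x u) w = m z u" "m (m u x) w = m z u"
    by (simp_all add: z_def ac_simps)
  have levels_y: "m y (m u w') = m z u" "m (m y u) w' = m z u" "m (m u y) w' = m z u"
    by (simp_all add: z' ac_simps)
  note levels = levels_x(2,3) levels_y(2,3)
  have in_z: "iota x (m u w) a \<in> C (m z u)" "iota y (m u w') c \<in> C (m z u)"
      "iota u z b \<in> C (m z u)"
    using iota_in[OF assms(1), of "m u w"] iota_in[OF assms(3), of "m u w'"] iota_in[OF assms(2), of z]
    by (simp_all only: levels_x levels_y commute)
  show "sieved_le m le iota (sieved_mu m mu iota (x, a) (u, b)) (sieved_mu m mu iota (y, c) (u, b))"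
    unfolding sieved_mu_pair
    using pheap_mu_mono_left[OF pheap in_z(1,2,3) concretized_le]
      iota_sieved_mu[OF assms(1,2), of w] iota_sieved_mu[OF assms(3,2), of w']
    by (intro sieved_le_intro[where w = w and w' = w']) (simp_all add: levels flip: z_def z')
  show "sieved_le m le iota (sieved_mu m mu iota (u, b) (x, a)) (sieved_mu m mu iota (u, b) (y, c))"
    unfolding sieved_mu_pair
    using pheap_mu_mono_right[OF pheap in_z(3,1,2) concretized_le]
      iota_sieved_mu[OF assms(2,1), of w] iota_sieved_mu[OF assms(2,3), of w']
    by (intro sieved_le_intro[where w = w and w' = w']) (simp_all add: levels flip: z_def z')
qed

end

theorem lemma2:
  fixes m :: "'s \<Rightarrow> 's \<Rightarrow> 's" and C :: "'s \<Rightarrow> 'a set"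
    and le :: "'s \<Rightarrow> 'a \<Rightarrow> 'a \<Rightarrow> bool" and mu :: "'s \<Rightarrow> 'a \<Rightarrow> 'a \<Rightarrow> 'a"
    and ga :: "'s \<Rightarrow> 'a \<Rightarrow> 'a" and iota :: "'s \<Rightarrow> 's \<Rightarrow> 'a \<Rightarrow> 'a"
  assumes "sieved_data m C le mu ga iota"
    and "p \<in> sieved_carrier C" and "q \<in> sieved_carrier C" and "r \<in> sieved_carrier C"
    and "sieved_le m le iota p r"
  shows "sieved_le m le iota (sieved_mu m mu iota p q) (sieved_mu m mu iota r q)
       \<and> sieved_le m le iota (sieved_mu m mu iota q p) (sieved_mu m mu iota q r)"
proof -
  interpret sieved_pheap m C le mu ga iota
    by (rule sieved_pheap.intro) (rule assms(1))
  obtain x a u b y c where "p = (x, a)" "q = (u, b)" "r = (y, c)"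
    and "a \<in> C x" "b \<in> C u" "c \<in> C y"
    using assms(2-4) unfolding sieved_carrier_def by auto
  moreover obtain w w' where "m x w = m y w'" "le (m x w) (iota x w a) (iota y w' c)"
    using assms(5) unfolding sieved_le_def \<open>p = (x, a)\<close> \<open>r = (y, c)\<close> by auto
  ultimately show ?thesis
    using sieved_mu_mono by blast
qed

end
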